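(* Let $H$ be a real or complex Hilbert space of dimension $n$, let $N\ge n$, let $\{q_i\}_{i=1}^N$ be a weight number sequence, and let $F=\{f_i\}_{i=1}^N$ be a probabilistic uniform Parseval frame for $H$. Then its canonical dual is the unique 1-erasure probabilistic optimal dual of $F$, and therefore it is an $m$-erasure probabilistic optimal dual of $F$ for every $m$.
   Context: Inner products are linear in the first argument. A frame $F=\{f_i\}_{i=1}^N$ for $H$ is Parseval if $\sum_i|\langle f,f_i\rangle|^2=\|f\|^2$ for all $f$. A probabilistic uniform Parseval frame is a Parseval frame with $\|f_i\|^2=1/q_i$ for all $i$. Frame operator: $S_F=\Theta_F^*\Theta_F$, where $\Theta_Ff=(\langle f,f_i\rangle)_i$. The canonical dual is $\{S_F^{-1}f_i\}$. A dual of $F$ is a frame $G=\{g_i\}_{i=1}^N$ with $f=\sum_i\langle f,f_i\rangle g_i=\sum_i\langle f,g_i\rangle f_i$ for all $f$. A probability sequence satisfies $0\le p_i\le1$ and $\sum p_i=1$. Weight numbers: $q_i=\frac{\sum_jp_j}{\sum_jp_j-p_i}\cdot\frac{N-1}{n}$ (assumed well defined). For $1\le m\le N$, $\mathcal{D}_m^p$ is the set of $N\times N$ diagonal matrices $D$ for which there is $\Lambda$ with $|\Lambda|=m$, $D_{ii}=q_i$ for $i\in\Lambda$ and $0$ otherwise. $d_m^p(F,G)=\max\{\|\Theta_G^*D\Theta_F\|:D\in\mathcal{D}_m^p\}$ (operator norm), where $\Theta_G^*(c)=\sum_ic_ig_i$. Optimal duals are defined recursively: - $G$ is a 1-erasure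 probabilistic optimal dual of $F$ if $d_1^p(F,G)=\inf\{d_1^p(F,G'):G'\text{ a dual of }F\}$; - for $m\ge2$, $G$ is an $m$-erasure probabilistic optimal dual if it is an $(m-1)$-erasure probabilistic optimal dual and $d_m^p(F,G)=\inf\{d_m^p(F,G'):G'\text{ an }(m-1)\text{-erasure probabilistic optimal dual of }F\}$. *)

theory Defs
  imports "HOL-Analysis.Analysis"
begin

text \<open>The Hilbert space H of dimension n = CARD('n) is modelled (up to isometric
isomorphism) as K^n inside complex^'n, where the scalar field K is either the reals
(K = Reals) or the complex numbers (K = UNIV).  Frames are indexed by {0..<N}.\<close>

definition hspace :: "complex set \<Rightarrow> (complex ^ 'n) set" where
  "hspace K = {x. \<forall>i. x $ i \<in> K}"

definition ip :: "complex ^ 'n \<Rightarrow> complex ^ 'n \<Rightarrow> complex" where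
  "ip x y = (\<Sum>i\<in>UNIV. x $ i * cnj (y $ i))"

definition is_frame :: "complex set \<Rightarrow> nat \<Rightarrow> (nat \<Rightarrow> complex ^ 'n) \<Rightarrow> bool" where
  "is_frame K N F \<longleftrightarrow> (\<forall>i<N. F i \<in> hspace K) \<and>
     (\<exists>A B. 0 < A \<and> A \<le> B \<and> (\<forall>f\<in>hspace K.
        A * (norm f)\<^sup>2 \<le> (\<Sum>i<N. (cmod (ip f (F i)))\<^sup>2) \<and>
        (\<Sum>i<N. (cmod (ip f (F i)))\<^sup>2) \<le> B * (norm f)\<^sup>2))"

definition is_parseval :: "complex set \<Rightarrow> nat \<Rightarrow> (nat \<Rightarrow> complex ^ 'n) \<Rightarrow> bool" where
  "is_parseval K N F \<longleftrightarrow> (\<forall>i<N. F i \<in> hspace K) \<and>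
     (\<forall>f\<in>hspace K. (\<Sum>i<N. (cmod (ip f (F i)))\<^sup>2) = (norm f)\<^sup>2)"

definition prob_seq :: "nat \<Rightarrow> (nat \<Rightarrow> real) \<Rightarrow> bool" where
  "prob_seq N p \<longleftrightarrow> (\<forall>i<N. 0 \<le> p i \<and> p i \<le> 1) \<and> (\<Sum>i<N. p i) = 1"

definition weight :: "nat \<Rightarrow> nat \<Rightarrow> (nat \<Rightarrow> real) \<Rightarrow> nat \<Rightarrow> real" where
  "weight n N p i = (\<Sum>j<N. p j) / ((\<Sum>j<N. p j) - p i) * (real N - 1) / real n"

definition is_prob_uniform_parseval ::
  "complex set \<Rightarrow> nat \<Rightarrow> (nat \<Rightarrow> real) \<Rightarrow> (nat \<Rightarrow> complex ^ 'n) \<Rightarrow> bool" where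
  "is_prob_uniform_parseval K N q F \<longleftrightarrow> is_parseval K N F \<and>
     (\<forall>i<N. (norm (F i))\<^sup>2 = 1 / q i)"

definition frame_op :: "nat \<Rightarrow> (nat \<Rightarrow> complex ^ 'n) \<Rightarrow> complex ^ 'n \<Rightarrow> complex ^ 'n" where
  "frame_op N F f = (\<Sum>i<N. ip f (F i) *s F i)"

definition canonical_dual ::
  "complex set \<Rightarrow> nat \<Rightarrow> (nat \<Rightarrow> complex ^ 'n) \<Rightarrow> nat \<Rightarrow> complex ^ 'n" where
  "canonical_dual K N F i = inv_into (hspace K) (frame_op N F) (F i)"

definition is_dual :: "complex set \<Rightarrow> nat \<Rightarrow> (nat \<Rightarrow> complex ^ 'n) \<Rightarrow> (nat \<Rightarrow> complex ^ 'n) \<Rightarrow> bool" where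
  "is_dual K N F G \<longleftrightarrow> is_frame K N G \<and>
     (\<forall>f\<in>hspace K. f = (\<Sum>i<N. ip f (F i) *s G i) \<and> f = (\<Sum>i<N. ip f (G i) *s F i))"

definition op_norm :: "complex set \<Rightarrow> (complex ^ 'n \<Rightarrow> complex ^ 'n) \<Rightarrow> real" where
  "op_norm K T = Sup {norm (T f) | f. f \<in> hspace K \<and> norm f \<le> 1}"

text \<open>Theta_G^* D Theta_F for D in D_m^p with support Lambda: f maps to
  sum over i in Lambda of q_i <f,f_i> g_i.\<close>
definition erasure_op :: "(nat \<Rightarrow> real) \<Rightarrow> nat set \<Rightarrow> (nat \<Rightarrow> complex ^ 'n) \<Rightarrow> (nat \<Rightarrow> complex ^ 'n)
    \<Rightarrow> complex ^ 'n \<Rightarrow> complex ^ 'n" where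
  "erasure_op q \<Lambda> F G f = (\<Sum>i\<in>\<Lambda>. (complex_of_real (q i) * ip f (F i)) *s G i)"

definition d_erasure :: "complex set \<Rightarrow> nat \<Rightarrow> (nat \<Rightarrow> real) \<Rightarrow> nat \<Rightarrow>
    (nat \<Rightarrow> complex ^ 'n) \<Rightarrow> (nat \<Rightarrow> complex ^ 'n) \<Rightarrow> real" where
  "d_erasure K N q m F G =
     Max {op_norm K (erasure_op q \<Lambda> F G) | \<Lambda>. \<Lambda> \<subseteq> {..<N} \<and> card \<Lambda> = m}"

text \<open>opt_dual K N q m F G: G is an m-erasure probabilistic optimal dual of F
  (for m \<ge> 1); opt_dual ... 0 F G just means G is a dual of F.\<close>
fun opt_dual :: "complex set \<Rightarrow> nat \<Rightarrow> (nat \<Rightarrow> real) \<Rightarrow> nat \<Rightarrow>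
    (nat \<Rightarrow> complex ^ 'n) \<Rightarrow> (nat \<Rightarrow> complex ^ 'n) \<Rightarrow> bool" where
  "opt_dual K N q 0 F G = is_dual K N F G"
| "opt_dual K N q (Suc m) F G = (opt_dual K N q m F G \<and>
     d_erasure K N q (Suc m) F G =
       Inf {d_erasure K N q (Suc m) F G' | G'. opt_dual K N q m F G'})"

end

theory Submission
  imports Defs
begin

text \<open>A Parseval frame has the identity as frame operator, so its canonical dual is \<open>F\<close>
itself, and for every dual \<open>G\<close> comparing traces gives
\<open>\<Sum>\<^sub>i Re \<langle>g\<^sub>i, f\<^sub>i\<rangle> = n = \<Sum>\<^sub>i \<parallel>f\<^sub>i\<parallel>\<^sup>2\<close>.
The one-erasure error is \<open>d\<^sub>1(F,G) = max\<^sub>i q\<^sub>i \<parallel>f\<^sub>i\<parallel> \<parallel>g\<^sub>i\<parallel>\<close>, which for a uniform frame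
(\<open>q\<^sub>i \<parallel>f\<^sub>i\<parallel>\<^sup>2 = 1\<close>) is \<open>max\<^sub>i \<parallel>g\<^sub>i\<parallel> / \<parallel>f\<^sub>i\<parallel>\<close>. By Cauchy-Schwarz
\<open>n \<le> \<Sum>\<^sub>i \<parallel>g\<^sub>i\<parallel> \<parallel>f\<^sub>i\<parallel> \<le> d\<^sub>1(F,G) n\<close>, so \<open>d\<^sub>1(F,G) \<ge> 1 = d\<^sub>1(F,F)\<close>, and equality forces
\<open>g\<^sub>i = f\<^sub>i\<close> for all \<open>i\<close>. Every \<open>m\<close>-erasure optimal dual is in particular one-erasure optimal,
so this uniqueness makes \<open>F\<close> optimal for every \<open>m\<close>.\<close>

lemma inner_eq_Re_ip: "inner x y = Re (ip x y)" for x y :: "complex ^ 'n"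
  unfolding inner_vec_def ip_def by (simp add: inner_complex_def Re_sum)

lemma ip_self: "ip x x = complex_of_real ((norm x)\<^sup>2)" for x :: "complex ^ 'n"
proof -
  have "Im (ip x x) = 0" unfolding ip_def by (simp add: Im_sum)
  moreover have "Re (ip x x) = (norm x)\<^sup>2" by (simp add: power2_norm_eq_inner inner_eq_Re_ip)
  ultimately show ?thesis by (simp add: complex_eq_iff)
qed

lemma ip_commute: "ip y x = cnj (ip x y)"
  unfolding ip_def by (simp add: mult.commute)

lemma ip_smult_left: "ip (c *s x) y = c * ip x y"
  unfolding ip_def by (simp add: sum_distrib_left mult.assoc)

lemma ip_add_left: "ip (x + y) z = ip x z + ip y z"
  unfolding ip_def by (simp add: sum.distrib distrib_right)

lemma ip_diff_left: "ip (x - y) z = ip x z - ip y z"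
  unfolding ip_def by (simp add: sum_subtractf left_diff_distrib)

lemma ip_zero_left: "ip 0 z = 0"
  unfolding ip_def by simp

lemma ip_sum_left: "ip (\<Sum>i\<in>A. x i) z = (\<Sum>i\<in>A. ip (x i) z)"
  by (induction A rule: infinite_finite_induct) (auto simp: ip_add_left ip_zero_left)

lemma ip_axis_right: "ip x (axis k 1) = x $ k"
  unfolding ip_def axis_def by (simp add: if_distrib cong: if_cong)

lemma ip_axis_left: "ip (axis k 1) x = cnj (x $ k)"
  by (subst ip_commute) (simp add: ip_axis_right)

lemma scaleR_eq_smult: "r *\<^sub>R x = complex_of_real r *s x" for x :: "complex ^ 'n"
proof -
  have "(r *\<^sub>R x) $ i = complex_of_real r * x $ i" for i
    by (metis vector_scaleR_component scaleR_conv_of_real)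
  thus ?thesis by (simp add: vec_eq_iff del: vector_scaleR_component)
qed

lemma norm_smult: "norm (c *s x) = cmod c * norm x" for x :: "complex ^ 'n"
proof -
  have "(norm (c *s x))\<^sup>2 = (cmod c * norm x)\<^sup>2"
    unfolding power2_norm_eq_inner power_mult_distrib inner_vec_def
    by (simp add: inner_complex_def sum_distrib_left algebra_simps power2_eq_square cmod_power2)
  thus ?thesis by (simp add: power2_eq_iff_nonneg)
qed

lemma cmod_ip_le: "cmod (ip x y) \<le> norm x * norm y" for x y :: "complex ^ 'n"
proof (cases "ip x y = 0")
  case False
  \<comment> \<open>Rotate \<open>x\<close> by a unimodular scalar so that the complex inner product becomes real.\<close>
  define c where "c = cnj (ip x y) / cmod (ip x y)"
  have "ip (c *s x) y = cnj (ip x y) * ip x y / cmod (ip x y)"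
    by (simp add: ip_smult_left c_def)
  also have "\<dots> = complex_of_real (cmod (ip x y))"
    using False by (simp add: complex_norm_square[symmetric] mult.commute power2_eq_square)
  finally have "cmod (ip x y) = inner (c *s x) y" by (simp add: inner_eq_Re_ip)
  also have "\<dots> \<le> norm (c *s x) * norm y" by (rule norm_cauchy_schwarz)
  also have "\<dots> = norm x * norm y" using False by (simp add: norm_smult c_def norm_divide)
  finally show ?thesis .
qed simp

lemma cmod_add_sq_minus_cmod_diff_sq: "(cmod (u + v))\<^sup>2 - (cmod (u - v))\<^sup>2 = 4 * Re (u * cnj v)"
  unfolding cmod_power2 by (simp add: algebra_simps power2_eq_square)

lemma norm_add_sq_minus_norm_diff_sq:
  "(norm (x + y))\<^sup>2 - (norm (x - y))\<^sup>2 = 4 * inner x y" for x y :: "'a::real_inner"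
  by (simp add: power2_norm_eq_inner inner_add inner_diff inner_commute)

lemma hspace_axis: "K = \<real> \<or> K = UNIV \<Longrightarrow> axis k 1 \<in> hspace K"
  unfolding hspace_def axis_def by auto

lemma hspace_add: "K = \<real> \<or> K = UNIV \<Longrightarrow> x \<in> hspace K \<Longrightarrow> y \<in> hspace K \<Longrightarrow> x + y \<in> hspace K"
  unfolding hspace_def by auto

lemma hspace_diff: "K = \<real> \<or> K = UNIV \<Longrightarrow> x \<in> hspace K \<Longrightarrow> y \<in> hspace K \<Longrightarrow> x - y \<in> hspace K"
  unfolding hspace_def by auto

lemma hspace_scaleR: "K = \<real> \<or> K = UNIV \<Longrightarrow> x \<in> hspace K \<Longrightarrow> r *\<^sub>R x \<in> hspace K"
  unfolding hspace_def scaleR_eq_smult by (auto simp: Reals_mult)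

lemma frame_op_component: "frame_op N F f $ k = (\<Sum>i<N. ip f (F i) * F i $ k)"
  unfolding frame_op_def by (simp add: sum_component)

lemma Re_ip_frame_op_parseval:
  assumes K: "K = \<real> \<or> K = UNIV" and P: "is_parseval K N F"
    and x: "x \<in> hspace K" and g: "g \<in> hspace K"
  shows "Re (ip (frame_op N F x) g) = Re (ip x g)"
proof -
  have par: "\<And>f. f \<in> hspace K \<Longrightarrow> (\<Sum>i<N. (cmod (ip f (F i)))\<^sup>2) = (norm f)\<^sup>2"
    using P unfolding is_parseval_def by auto
  have "4 * Re (ip (frame_op N F x) g) = (\<Sum>i<N. 4 * Re (ip x (F i) * cnj (ip g (F i))))"
    unfolding frame_op_def ip_sum_left
    by (simp add: ip_smult_left ip_commute[of "F _" g] Re_sum sum_distrib_left)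
  also have "\<dots> = (\<Sum>i<N. (cmod (ip (x + g) (F i)))\<^sup>2) - (\<Sum>i<N. (cmod (ip (x - g) (F i)))\<^sup>2)"
    by (simp add: sum_subtractf[symmetric] ip_add_left ip_diff_left cmod_add_sq_minus_cmod_diff_sq)
  also have "\<dots> = (norm (x + g))\<^sup>2 - (norm (x - g))\<^sup>2"
    using par hspace_add[OF K x g] hspace_diff[OF K x g] by simp
  also have "\<dots> = 4 * Re (ip x g)" by (simp add: norm_add_sq_minus_norm_diff_sq inner_eq_Re_ip)
  finally show ?thesis by simp
qed

lemma frame_op_parseval:
  fixes F :: "nat \<Rightarrow> complex ^ 'n"
  assumes K: "K = \<real> \<or> K = UNIV" and P: "is_parseval K N F" and f: "f \<in> hspace K"
  shows "frame_op N F f = f"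
proof -
  have Re_eq: "Re (frame_op N F x $ k) = Re (x $ k)" if "x \<in> hspace K" for x k
    using Re_ip_frame_op_parseval[OF K P that hspace_axis[OF K]] by (simp add: ip_axis_right)
  have Im_eq: "Im (frame_op N F f $ k) = Im (f $ k)" for k
    using K
  proof
    assume "K = UNIV"
    \<comment> \<open>The imaginary part of a coordinate is the real part of the coordinate of \<open>\<i> f\<close>.\<close>
    hence "\<i> *s f \<in> hspace K" unfolding hspace_def by simp
    from Re_eq[OF this, of k] have "Re (\<i> * frame_op N F f $ k) = Re (\<i> * f $ k)"
      by (simp add: frame_op_component ip_smult_left sum_distrib_left mult.assoc)
    thus ?thesis by simp
  next
    assume KR: "K = \<real>"
    have "F i \<in> hspace K" if "i < N" for i
      using P that unfolding is_parseval_def by auto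
    hence "ip f (F i) * F i $ k \<in> \<real>" if "i < N" for i
      using f KR that unfolding hspace_def ip_def
      by (auto intro!: sum_in_Reals Reals_mult simp: Reals_cnj_iff)
    hence "frame_op N F f $ k \<in> \<real>" unfolding frame_op_component by (auto intro!: sum_in_Reals)
    moreover have "f $ k \<in> \<real>" using f KR by (auto simp: hspace_def)
    ultimately show ?thesis by (simp add: complex_is_Real_iff)
  qed
  show ?thesis using Re_eq[OF f] Im_eq by (simp add: vec_eq_iff complex_eq_iff)
qed

lemma canonical_dual_parseval:
  assumes K: "K = \<real> \<or> K = UNIV" and P: "is_parseval K N F" and i: "i < N"
  shows "canonical_dual K N F i = F i"
proof -
  have S: "\<And>f. f \<in> hspace K \<Longrightarrow> frame_op N F f = f" using frame_op_parseval[OF K P] .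
  have "F i \<in> hspace K" using P i unfolding is_parseval_def by auto
  hence im: "F i \<in> frame_op N F ` hspace K" using S by (metis image_eqI)
  have "inv_into (hspace K) (frame_op N F) (F i) \<in> hspace K" by (rule inv_into_into[OF im])
  thus ?thesis unfolding canonical_dual_def using S f_inv_into_f[OF im] by metis
qed

lemma parseval_is_dual_self:
  assumes K: "K = \<real> \<or> K = UNIV" and P: "is_parseval K N F"
  shows "is_dual K N F F"
  unfolding is_dual_def is_frame_def
proof (intro conjI)
  show "\<forall>i<N. F i \<in> hspace K" using P unfolding is_parseval_def by auto
  show "\<exists>A B. 0 < A \<and> A \<le> B \<and> (\<forall>f\<in>hspace K. A * (norm f)\<^sup>2 \<le> (\<Sum>i<N. (cmod (ip f (F i)))\<^sup>2) \<and>
      (\<Sum>i<N. (cmod (ip f (F i)))\<^sup>2) \<le> B * (norm f)\<^sup>2)"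
    using P unfolding is_parseval_def by (intro exI[of _ 1]) auto
  show "\<forall>f\<in>hspace K. f = (\<Sum>i<N. ip f (F i) *s F i) \<and> f = (\<Sum>i<N. ip f (F i) *s F i)"
    using frame_op_parseval[OF K P] unfolding frame_op_def by auto
qed

text \<open>The trace of the identity \<open>f \<mapsto> \<Sum>\<^sub>i \<langle>f, f\<^sub>i\<rangle> g\<^sub>i\<close>, computed in the standard basis.\<close>
lemma sum_inner_dual_eq_dim:
  fixes F G :: "nat \<Rightarrow> complex ^ 'n"
  assumes K: "K = \<real> \<or> K = UNIV" and D: "is_dual K N F G"
  shows "(\<Sum>i<N. inner (G i) (F i)) = real CARD('n)"
proof -
  have diag: "(\<Sum>i<N. cnj (F i $ k) * G i $ k) = 1" for k
  proof -
    have "axis k 1 = (\<Sum>i<N. ip (axis k 1) (F i) *s G i)"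
      using D hspace_axis[OF K] unfolding is_dual_def by blast
    hence "axis k (1::complex) $ k = (\<Sum>i<N. ip (axis k 1) (F i) *s G i) $ k" by simp
    thus ?thesis by (simp add: sum_component ip_axis_left)
  qed
  have "(\<Sum>i<N. ip (G i) (F i)) = (\<Sum>k\<in>UNIV. \<Sum>i<N. cnj (F i $ k) * G i $ k)"
    unfolding ip_def by (subst sum.swap) (simp add: mult.commute)
  also have "\<dots> = of_nat CARD('n)" by (simp add: diag)
  finally show ?thesis by (simp add: inner_eq_Re_ip flip: Re_sum)
qed

lemma one_le_if_norm_le_sum_inner_eq:
  fixes F G :: "'b \<Rightarrow> 'a::real_inner"
  assumes le: "\<forall>i\<in>A. norm (G i) \<le> M * norm (F i)"
    and eq: "(\<Sum>i\<in>A. inner (G i) (F i)) = (\<Sum>i\<in>A. (norm (F i))\<^sup>2)"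
    and pos: "0 < (\<Sum>i\<in>A. (norm (F i))\<^sup>2)"
  shows "1 \<le> M"
proof -
  have "(\<Sum>i\<in>A. (norm (F i))\<^sup>2) \<le> (\<Sum>i\<in>A. norm (G i) * norm (F i))"
    unfolding eq[symmetric] by (intro sum_mono norm_cauchy_schwarz)
  also have "\<dots> \<le> (\<Sum>i\<in>A. M * (norm (F i))\<^sup>2)"
    using le by (intro sum_mono) (auto simp: power2_eq_square mult.assoc[symmetric] intro!: mult_right_mono)
  also have "\<dots> = M * (\<Sum>i\<in>A. (norm (F i))\<^sup>2)" by (simp add: sum_distrib_left)
  finally show ?thesis using pos by simp
qed

lemma eq_if_norm_le_sum_inner_eq:
  fixes F G :: "'b \<Rightarrow> 'a::real_inner"
  assumes A: "finite A" and le: "\<forall>i\<in>A. norm (G i) \<le> norm (F i)"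
    and eq: "(\<Sum>i\<in>A. inner (G i) (F i)) = (\<Sum>i\<in>A. (norm (F i))\<^sup>2)"
  shows "\<forall>i\<in>A. G i = F i"
proof
  fix i assume i: "i \<in> A"
  have gap_nonneg: "0 \<le> (norm (F j))\<^sup>2 - inner (G j) (F j)" if "j \<in> A" for j
  proof -
    have "inner (G j) (F j) \<le> norm (G j) * norm (F j)" by (rule norm_cauchy_schwarz)
    also have "\<dots> \<le> norm (F j) * norm (F j)" using le that by (intro mult_right_mono) auto
    finally show ?thesis by (simp add: power2_eq_square)
  qed
  have "(\<Sum>j\<in>A. (norm (F j))\<^sup>2 - inner (G j) (F j)) = 0" using eq by (simp add: sum_subtractf)
  hence "\<forall>j\<in>A. (norm (F j))\<^sup>2 - inner (G j) (F j) = 0"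
    using sum_nonneg_eq_0_iff[OF A, of "\<lambda>j. (norm (F j))\<^sup>2 - inner (G j) (F j)"] gap_nonneg
    by simp
  hence inner_eq: "inner (G i) (F i) = (norm (F i))\<^sup>2" using i by simp
  have "(norm (G i - F i))\<^sup>2 = (norm (G i))\<^sup>2 - 2 * inner (G i) (F i) + (norm (F i))\<^sup>2"
    by (simp add: power2_norm_eq_inner inner_diff inner_commute)
  also have "\<dots> = (norm (G i))\<^sup>2 - (norm (F i))\<^sup>2" using inner_eq by simp
  also have "\<dots> \<le> 0" using power_mono[OF le[rule_format, OF i] norm_ge_zero, of 2] by simp
  finally show "G i = F i" by simp
qed

lemma op_norm_rank_one:
  fixes a b :: "complex ^ 'n"
  assumes K: "K = \<real> \<or> K = UNIV" and a: "a \<in> hspace K" and c: "0 \<le> c"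
  shows "op_norm K (\<lambda>f. (complex_of_real c * ip f a) *s b) = c * norm a * norm b"
proof -
  let ?S = "{norm ((complex_of_real c * ip f a) *s b) | f. f \<in> hspace K \<and> norm f \<le> 1}"
  have ub: "x \<le> c * norm a * norm b" if "x \<in> ?S" for x
  proof -
    obtain f where f: "norm f \<le> 1" and x: "x = norm ((complex_of_real c * ip f a) *s b)"
      using \<open>x \<in> ?S\<close> by blast
    have "x = c * cmod (ip f a) * norm b" using c by (simp add: x norm_smult norm_mult)
    also have "\<dots> \<le> c * (norm f * norm a) * norm b"
      using c by (intro mult_right_mono mult_left_mono cmod_ip_le) auto
    also have "\<dots> \<le> c * (1 * norm a) * norm b"
      using c f by (intro mult_right_mono mult_left_mono) auto
    finally show ?thesis by simp
  qed
  have attained: "c * norm a * norm b \<in> ?S"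
  proof (cases "a = 0")
    case True
    have "(0::complex^'n) \<in> hspace K" unfolding hspace_def using K by auto
    thus ?thesis using True by (force simp: ip_zero_left vec_eq_iff)
  next
    case False
    define f where "f = (1 / norm a) *\<^sub>R a"
    have "ip f a = complex_of_real (norm a)"
      using False by (simp add: f_def scaleR_eq_smult ip_smult_left ip_self power2_eq_square)
    moreover have "f \<in> hspace K" "norm f = 1"
      using False hspace_scaleR[OF K a] by (auto simp: f_def)
    ultimately show ?thesis using c by (force simp: norm_smult norm_mult)
  qed
  show ?thesis unfolding op_norm_def by (rule cSup_eq_maximum[OF attained ub])
qed

lemma d_erasure_1_eq_Max:
  fixes F G :: "nat \<Rightarrow> complex ^ 'n"
  assumes K: "K = \<real> \<or> K = UNIV" and Fh: "\<forall>i<N. F i \<in> hspace K" and q: "\<forall>i<N. 0 \<le> q i"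
  shows "d_erasure K N q 1 F G = Max ((\<lambda>i. q i * norm (F i) * norm (G i)) ` {..<N})"
proof -
  have single: "op_norm K (erasure_op q {i} F G) = q i * norm (F i) * norm (G i)" if "i < N" for i
    unfolding erasure_op_def using op_norm_rank_one[OF K, of "F i" "q i" "G i"] Fh q that by simp
  have "{op_norm K (erasure_op q \<Lambda> F G) | \<Lambda>. \<Lambda> \<subseteq> {..<N} \<and> card \<Lambda> = 1}
      = (\<lambda>i. op_norm K (erasure_op q {i} F G)) ` {..<N}"
    by (auto simp: card_1_singleton_iff)
  also have "\<dots> = (\<lambda>i. q i * norm (F i) * norm (G i)) ` {..<N}"
    using single by (intro image_cong) auto
  finally show ?thesis unfolding d_erasure_def by simp
qed

lemma d_erasure_1_le_iff_uniform:
  fixes F G :: "nat \<Rightarrow> complex ^ 'n"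
  assumes K: "K = \<real> \<or> K = UNIV" and Fh: "\<forall>i<N. F i \<in> hspace K"
    and uniform: "\<forall>i<N. q i * (norm (F i))\<^sup>2 = 1" and N: "0 < N"
  shows "d_erasure K N q 1 F G \<le> M \<longleftrightarrow> (\<forall>i<N. norm (G i) \<le> M * norm (F i))"
proof -
  have Fpos: "0 < norm (F i)" if "i < N" for i
    using uniform that by (cases "F i = 0") auto
  have term_eq: "q i * norm (F i) * norm (G i) = norm (G i) / norm (F i)" if "i < N" for i
  proof -
    have "q i * norm (F i) * norm (G i) = q i * (norm (F i))\<^sup>2 * norm (G i) / norm (F i)"
      using Fpos[OF that] by (simp add: field_simps power2_eq_square)
    thus ?thesis using uniform that by simp
  qed
  have q: "\<forall>i<N. 0 \<le> q i"
  proof (intro allI impI)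
    fix i assume "i < N"
    hence "0 < q i * (norm (F i))\<^sup>2" "0 < (norm (F i))\<^sup>2" using uniform Fpos by auto
    thus "0 \<le> q i" by (rule less_imp_le[OF zero_less_mult_pos2])
  qed
  have "d_erasure K N q 1 F G \<le> M \<longleftrightarrow> (\<forall>i<N. q i * norm (F i) * norm (G i) \<le> M)"
    unfolding d_erasure_1_eq_Max[OF K Fh q] using N by (simp add: lessThan_empty_iff) blast
  also have "\<dots> \<longleftrightarrow> (\<forall>i<N. norm (G i) \<le> M * norm (F i))"
    using term_eq Fpos by (simp add: pos_divide_le_eq)
  finally show ?thesis .
qed

lemma is_dual_cong:
  assumes "\<forall>i<N. G i = G' i"
  shows "is_dual K N F G = is_dual K N F G'"
proof -
  have "(\<Sum>i<N. (cmod (ip f (G i)))\<^sup>2) = (\<Sum>i<N. (cmod (ip f (G' i)))\<^sup>2)"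
    and "(\<Sum>i<N. ip f (F i) *s G i) = (\<Sum>i<N. ip f (F i) *s G' i)"
    and "(\<Sum>i<N. ip f (G i) *s F i) = (\<Sum>i<N. ip f (G' i) *s F i)" for f
    using assms by (auto intro: sum.cong)
  moreover have "(\<forall>i<N. G i \<in> hspace K) = (\<forall>i<N. G' i \<in> hspace K)" using assms by auto
  ultimately show ?thesis unfolding is_dual_def is_frame_def by presburger
qed

lemma d_erasure_cong:
  assumes "\<forall>i<N. G i = G' i"
  shows "d_erasure K N q m F G = d_erasure K N q m F G'"
proof -
  have "erasure_op q \<Lambda> F G = erasure_op q \<Lambda> F G'" if "\<Lambda> \<subseteq> {..<N}" for \<Lambda>
    unfolding erasure_op_def using assms that by (intro ext sum.cong) auto
  thus ?thesis unfolding d_erasure_def by (metis (lifting))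
qed

lemma opt_dual_cong:
  assumes "\<forall>i<N. G i = G' i"
  shows "opt_dual K N q m F G = opt_dual K N q m F G'"
  by (induction m) (simp_all add: is_dual_cong[OF assms] d_erasure_cong[OF assms])

lemma opt_dual_imp_opt_dual_1: "opt_dual K N q m F G \<Longrightarrow> 1 \<le> m \<Longrightarrow> opt_dual K N q 1 F G"
  by (induction m) (auto simp: le_Suc_eq)

lemma opt_dual_if_unique_opt_dual_1:
  assumes C: "opt_dual K N q 1 F C"
    and unique: "\<And>G. opt_dual K N q 1 F G \<Longrightarrow> \<forall>i<N. G i = C i"
    and m: "1 \<le> m"
  shows "opt_dual K N q m F C"
  using m
proof (induction m)
  case (Suc m)
  show ?case
  proof (cases "m = 0")
    case False
    with Suc have IH: "opt_dual K N q m F C" by simp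
    have "d_erasure K N q (Suc m) F G = d_erasure K N q (Suc m) F C" if "opt_dual K N q m F G" for G
      using False unique opt_dual_imp_opt_dual_1[OF that] by (simp add: d_erasure_cong)
    hence "{d_erasure K N q (Suc m) F G | G. opt_dual K N q m F G} = {d_erasure K N q (Suc m) F C}"
      using IH by blast
    thus ?thesis using IH by simp
  qed (use C in simp)
qed simp

lemma uniform_parseval_opt_dual_1_iff:
  fixes F G :: "nat \<Rightarrow> complex ^ 'n"
  assumes K: "K = \<real> \<or> K = UNIV" and U: "is_prob_uniform_parseval K N q F"
    and q: "\<forall>i<N. 0 < q i"
  shows "opt_dual K N q 1 F G \<longleftrightarrow> (\<forall>i<N. G i = F i)"
proof -
  have P: "is_parseval K N F" and Fh: "\<forall>i<N. F i \<in> hspace K"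
    using U unfolding is_prob_uniform_parseval_def is_parseval_def by auto
  have uniform: "\<forall>i<N. q i * (norm (F i))\<^sup>2 = 1"
    using U q unfolding is_prob_uniform_parseval_def by auto
  have selfdual: "is_dual K N F F" by (rule parseval_is_dual_self[OF K P])
  have trace: "(\<Sum>i<N. inner (G' i) (F i)) = (\<Sum>i<N. (norm (F i))\<^sup>2)" if "is_dual K N F G'" for G'
    using sum_inner_dual_eq_dim[OF K that] sum_inner_dual_eq_dim[OF K selfdual]
    by (simp add: power2_norm_eq_inner)
  have pos: "0 < (\<Sum>i<N. (norm (F i))\<^sup>2)"
    using sum_inner_dual_eq_dim[OF K selfdual] by (simp add: power2_norm_eq_inner)
  hence "0 < N" by (metis lessThan_0 less_irrefl neq0_conv sum.empty)
  note le_iff = d_erasure_1_le_iff_uniform[OF K Fh uniform this]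
  have lower: "1 \<le> d_erasure K N q 1 F G'" if "is_dual K N F G'" for G'
    using le_iff[of G' "d_erasure K N q 1 F G'"] trace[OF that] pos
    by (intro one_le_if_norm_le_sum_inner_eq[where A = "{..<N}" and F = F and G = G']) auto
  have dF: "d_erasure K N q 1 F F = 1"
    using le_iff[of F 1] lower[OF selfdual] by simp
  have Inf: "Inf {d_erasure K N q 1 F G' | G'. opt_dual K N q 0 F G'} = 1"
    by (rule cInf_eq_minimum) (use selfdual dF lower in auto)
  have opt_F: "opt_dual K N q 1 F F" using selfdual dF Inf by (simp add: One_nat_def)
  show ?thesis
  proof
    assume "opt_dual K N q 1 F G"
    hence D: "is_dual K N F G" and "d_erasure K N q 1 F G \<le> 1"
      using Inf by (simp_all add: One_nat_def)
    hence "\<forall>i\<in>{..<N}. norm (G i) \<le> norm (F i)" using le_iff by simp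
    from eq_if_norm_le_sum_inner_eq[OF _ this trace[OF D]] show "\<forall>i<N. G i = F i" by simp
  next
    assume "\<forall>i<N. G i = F i"
    hence "\<forall>i<N. F i = G i" by simp
    from opt_dual_cong[OF this] show "opt_dual K N q 1 F G" using opt_F by blast
  qed
qed

lemma weight_pos:
  assumes p: "prob_seq N p" and nz: "\<forall>i<N. (\<Sum>j<N. p j) - p i \<noteq> 0"
    and n: "0 < n" and i: "i < N"
  shows "0 < weight n N p i"
proof -
  have p_le: "\<forall>i<N. p i \<le> 1" and sum1: "(\<Sum>i<N. p i) = 1"
    using p unfolding prob_seq_def by auto
  have "N \<noteq> 1" using nz sum1 by auto
  hence "2 \<le> N" using i by linarith
  moreover have "0 < 1 - p i" using p_le nz i sum1 by force
  ultimately show ?thesis unfolding weight_def sum1 using n by simp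
qed

theorem corollary4p2:
  fixes K :: "complex set" and N :: nat and p :: "nat \<Rightarrow> real"
    and F :: "nat \<Rightarrow> complex ^ 'n"
  defines "q \<equiv> weight CARD('n) N p"
  assumes "K = \<real> \<or> K = UNIV"
    and "N \<ge> CARD('n)"
    and "prob_seq N p"
    and "\<forall>i<N. (\<Sum>j<N. p j) - p i \<noteq> 0"
    and "is_prob_uniform_parseval K N q F"
  shows "opt_dual K N q 1 F (canonical_dual K N F)
     \<and> (\<forall>G. opt_dual K N q 1 F G \<longrightarrow> (\<forall>i<N. G i = canonical_dual K N F i))
     \<and> (\<forall>m. 1 \<le> m \<and> m \<le> N \<longrightarrow> opt_dual K N q m F (canonical_dual K N F))"
proof -
  note K = assms(2) and U = assms(6)
  have q: "\<forall>i<N. 0 < q i" unfolding q_def using weight_pos[OF assms(4,5)] by simp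
  note opt_1_iff = uniform_parseval_opt_dual_1_iff[OF K U q]
  have "\<forall>i<N. canonical_dual K N F i = F i"
    using canonical_dual_parseval[OF K] U unfolding is_prob_uniform_parseval_def by blast
  hence opt_C: "opt_dual K N q 1 F (canonical_dual K N F)"
    and unique: "\<And>G. opt_dual K N q 1 F G \<Longrightarrow> \<forall>i<N. G i = canonical_dual K N F i"
    using opt_1_iff by simp_all
  moreover have "opt_dual K N q m F (canonical_dual K N F)" if "1 \<le> m" for m
    by (rule opt_dual_if_unique_opt_dual_1[OF opt_C unique that])
  ultimately show ?thesis by blast
qed

end
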